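(* Let $X_1,\dots,X_N$ be independent nonnegative random variables. (1) Suppose that for every $2\le j\le N$ there exists $\varphi_j\in\mathfrak{F}$ such that $\overline{F}_{X_j}(\varphi_j(x))=O(\overline{F}_{X_1}(x))$ and $\overline{F}_{X_1}(x/\varphi_j(x))=O(\overline{F}_{X_1}(x))$. Then $\overline{F}_{\prod_{i=1}^N X_i}(x)=O(\overline{F}_{X_1}(x))$. (2) Suppose that for every $2\le j\le N$ there exists $\varphi_j\in\mathfrak{F}$ such that $\overline{F}_{X_j}(\varphi_j(x))=O(\overline{F}_{X_1}(x))$ and $\overline{F}_{X_1}(x-\varphi_j(x))=O(\overline{F}_{X_1}(x))$. Then $\overline{F}_{\sum_{i=1}^N X_i}(x)=O(\overline{F}_{X_1}(x))$.
   Context: $\overline{F}_Y(x)=\Pr(Y>x)$; $f(x)=O(g(x))$ means $\limsup_{x\to\infty}f(x)/g(x)<\infty$. $\mathfrak{F}$ is the class of functions $\varphi:\mathbb{R}_{\ge0}\to\mathbb{R}_{\ge0}$ with $\lim_{x\to\infty}\varphi(x)=\infty$ and $\lim_{x\to\infty}\varphi(x)/x=0$. *)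

theory Defs
  imports "HOL-Probability.Probability" "HOL-Library.Landau_Symbols"
begin

definition tail :: "'a measure \<Rightarrow> ('a \<Rightarrow> real) \<Rightarrow> real \<Rightarrow> real" where
  "tail M Y x = measure M {\<omega> \<in> space M. x < Y \<omega>}"

definition frakF :: "(real \<Rightarrow> real) \<Rightarrow> bool" where
  "frakF \<phi> \<longleftrightarrow> (\<forall>x\<ge>0. \<phi> x \<ge> 0) \<and> filterlim \<phi> at_top at_top
     \<and> ((\<lambda>x. \<phi> x / x) \<longlongrightarrow> 0) at_top"

end

theory Submission
  imports Defs "HOL-Real_Asymp.Real_Asymp"
begin

text \<open>
  Both parts follow from a union bound and induction on \<open>N\<close>. For a partial sum \<open>S\<close> and the next
  summand \<open>Y\<close> one has \<open>Pr(S + Y > x) \<le> Pr(Y > \<phi> x) + Pr(S > x - \<phi> x)\<close>; the first term is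
  \<open>O(Pr(X\<^sub>1 > x))\<close> by hypothesis, and since \<open>x - \<phi> x \<rightarrow> \<infinity>\<close> the induction hypothesis gives
  \<open>Pr(S > x - \<phi> x) = O(Pr(X\<^sub>1 > x - \<phi> x)) = O(Pr(X\<^sub>1 > x))\<close>. For products the same works with
  \<open>Pr(S Y > x) \<le> Pr(Y > \<phi> x) + Pr(S > x / \<phi> x)\<close>, using \<open>S \<ge> 0\<close> and \<open>x / \<phi> x \<rightarrow> \<infinity>\<close>.
\<close>

lemma bigo_of_eventually_le_add_compose:
  fixes T T' B F \<phi> \<psi> :: "real \<Rightarrow> real"
  assumes T: "T \<in> O[at_top](F)"
    and B: "(\<lambda>x. B (\<phi> x)) \<in> O[at_top](F)"
    and F: "(\<lambda>x. F (\<psi> x)) \<in> O[at_top](F)"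
    and \<psi>: "filterlim \<psi> at_top at_top"
    and le: "eventually (\<lambda>x. T' x \<le> B (\<phi> x) + T (\<psi> x)) at_top"
    and nonneg: "\<And>x. T' x \<ge> 0"
  shows "T' \<in> O[at_top](F)"
proof -
  have "(\<lambda>x. T (\<psi> x)) \<in> O[at_top](\<lambda>x. F (\<psi> x))"
    using landau_o.big.compose[OF T \<psi>] .
  with F have "(\<lambda>x. T (\<psi> x)) \<in> O[at_top](F)"
    using landau_o.big_trans by blast
  with B have bound: "(\<lambda>x. B (\<phi> x) + T (\<psi> x)) \<in> O[at_top](F)"
    using sum_in_bigo by blast
  have "T' \<in> O[at_top](\<lambda>x. B (\<phi> x) + T (\<psi> x))"
    by (rule landau_o.big_mono) (use le nonneg in \<open>auto elim!: eventually_mono\<close>)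
  with bound show ?thesis
    using landau_o.big_trans by blast
qed

lemma tail_nonneg: "tail M Y x \<ge> 0"
  by (simp add: tail_def)

lemma tail_le_tail_add_tail:
  assumes "prob_space M" "A \<in> borel_measurable M" "B \<in> borel_measurable M"
    and "{\<omega> \<in> space M. x < C \<omega>} \<subseteq> {\<omega> \<in> space M. p < B \<omega>} \<union> {\<omega> \<in> space M. q < A \<omega>}"
  shows "tail M C x \<le> tail M B p + tail M A q"
proof -
  interpret prob_space M by fact
  have "tail M C x \<le> measure M ({\<omega> \<in> space M. p < B \<omega>} \<union> {\<omega> \<in> space M. q < A \<omega>})"
    unfolding tail_def using assms by (intro finite_measure_mono) auto
  also have "\<dots> \<le> tail M B p + tail M A q"
    unfolding tail_def using assms by (intro measure_Un_le) auto
  finally show ?thesis .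
qed

lemma tail_add_le:
  assumes "prob_space M" "A \<in> borel_measurable M" "B \<in> borel_measurable M"
  shows "tail M (\<lambda>\<omega>. A \<omega> + B \<omega>) x \<le> tail M B p + tail M A (x - p)"
  using assms by (intro tail_le_tail_add_tail) auto

lemma tail_mult_le:
  assumes "prob_space M" "A \<in> borel_measurable M" "B \<in> borel_measurable M"
    and A_nonneg: "\<forall>\<omega>\<in>space M. A \<omega> \<ge> 0" and "p > 0"
  shows "tail M (\<lambda>\<omega>. A \<omega> * B \<omega>) x \<le> tail M B p + tail M A (x / p)"
proof (rule tail_le_tail_add_tail[OF assms(1-3)], safe)
  fix \<omega> assume \<omega>: "\<omega> \<in> space M" "x < A \<omega> * B \<omega>" "\<not> x / p < A \<omega>"
  have "A \<omega> * p \<le> x"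
    using \<omega>(3) \<open>p > 0\<close> by (simp add: field_simps)
  moreover have "A \<omega> * B \<omega> \<le> A \<omega> * p" if "B \<omega> \<le> p"
    using that A_nonneg \<omega>(1) by (simp add: mult_left_mono)
  ultimately show "p < B \<omega>"
    using \<omega>(2) by linarith
qed

lemma frakF_eventually_pos:
  assumes "frakF \<phi>" shows "eventually (\<lambda>x. \<phi> x > 0) at_top"
  using assms unfolding frakF_def by (simp add: filterlim_at_top_dense)

lemma frakF_eventually_less:
  assumes "frakF \<phi>" "c > 0" shows "eventually (\<lambda>x. \<phi> x < c * x) at_top"
proof -
  have "((\<lambda>x. \<phi> x / x) \<longlongrightarrow> 0) at_top"
    using assms(1) unfolding frakF_def by blast
  then have "eventually (\<lambda>x. \<phi> x / x < c) at_top"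
    using \<open>c > 0\<close> order_tendstoD(2) by blast
  then show ?thesis
    using eventually_gt_at_top[of 0] by eventually_elim (simp add: divide_less_eq)
qed

lemma filterlim_minus_frakF:
  assumes "frakF \<phi>" shows "filterlim (\<lambda>x. x - \<phi> x) at_top at_top"
proof (rule filterlim_at_top_mono[of "\<lambda>x. x / 2"])
  show "filterlim (\<lambda>x::real. x / 2) at_top at_top"
    by real_asymp
  show "eventually (\<lambda>x. x / 2 \<le> x - \<phi> x) at_top"
    using frakF_eventually_less[OF assms, of "1/2"] by (auto elim!: eventually_mono)
qed

lemma filterlim_divide_frakF:
  assumes "frakF \<phi>" shows "filterlim (\<lambda>x. x / \<phi> x) at_top at_top"
  unfolding filterlim_at_top
proof
  fix Z :: real
  have "1 / (\<bar>Z\<bar> + 1) > 0" by simp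
  from frakF_eventually_less[OF assms this] frakF_eventually_pos[OF assms]
    eventually_gt_at_top[of 0]
  show "eventually (\<lambda>x. Z \<le> x / \<phi> x) at_top"
  proof eventually_elim
    case (elim x)
    then have "\<phi> x * (\<bar>Z\<bar> + 1) < x" by (simp add: field_simps)
    then have "\<bar>Z\<bar> + 1 \<le> x / \<phi> x" using elim by (simp add: field_simps)
    then show ?case by linarith
  qed
qed

lemma tail_add_bigo:
  assumes "prob_space M" "A \<in> borel_measurable M" "B \<in> borel_measurable M"
    and "tail M A \<in> O[at_top](F)" "frakF \<phi>"
    and "(\<lambda>x. tail M B (\<phi> x)) \<in> O[at_top](F)" "(\<lambda>x. F (x - \<phi> x)) \<in> O[at_top](F)"
  shows "tail M (\<lambda>\<omega>. A \<omega> + B \<omega>) \<in> O[at_top](F)"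
proof (rule bigo_of_eventually_le_add_compose[where B = "tail M B" and \<psi> = "\<lambda>x. x - \<phi> x",
    OF assms(4,6,7) filterlim_minus_frakF[OF assms(5)]])
  show "eventually (\<lambda>x. tail M (\<lambda>\<omega>. A \<omega> + B \<omega>) x \<le> tail M B (\<phi> x) + tail M A (x - \<phi> x)) at_top"
    using tail_add_le[OF assms(1-3)] by simp
qed (rule tail_nonneg)

lemma tail_mult_bigo:
  assumes "prob_space M" "A \<in> borel_measurable M" "B \<in> borel_measurable M"
    and "\<forall>\<omega>\<in>space M. A \<omega> \<ge> 0"
    and "tail M A \<in> O[at_top](F)" "frakF \<phi>"
    and "(\<lambda>x. tail M B (\<phi> x)) \<in> O[at_top](F)" "(\<lambda>x. F (x / \<phi> x)) \<in> O[at_top](F)"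
  shows "tail M (\<lambda>\<omega>. A \<omega> * B \<omega>) \<in> O[at_top](F)"
proof (rule bigo_of_eventually_le_add_compose[where B = "tail M B" and \<psi> = "\<lambda>x. x / \<phi> x",
    OF assms(5,7,8) filterlim_divide_frakF[OF assms(6)]])
  show "eventually (\<lambda>x. tail M (\<lambda>\<omega>. A \<omega> * B \<omega>) x \<le> tail M B (\<phi> x) + tail M A (x / \<phi> x)) at_top"
    using frakF_eventually_pos[OF assms(6)]
    by eventually_elim (rule tail_mult_le[OF assms(1-4)])
qed (rule tail_nonneg)

lemma tail_sum_bigo:
  fixes N :: nat
  assumes "prob_space M" "N \<ge> 1" "\<And>i. i \<in> {1..N} \<Longrightarrow> X i \<in> borel_measurable M"
    and "\<forall>j\<in>{2..N}. \<exists>\<phi>. frakF \<phi>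
          \<and> (\<lambda>x. tail M (X j) (\<phi> x)) \<in> O[at_top](tail M (X 1))
          \<and> (\<lambda>x. tail M (X 1) (x - \<phi> x)) \<in> O[at_top](tail M (X 1))"
  shows "tail M (\<lambda>\<omega>. \<Sum>i\<in>{1..N}. X i \<omega>) \<in> O[at_top](tail M (X 1))"
  using assms(2-4)
proof (induction N rule: nat_induct_at_least)
  case (Suc N)
  then obtain \<phi> where "frakF \<phi>" "(\<lambda>x. tail M (X (Suc N)) (\<phi> x)) \<in> O[at_top](tail M (X 1))"
    "(\<lambda>x. tail M (X 1) (x - \<phi> x)) \<in> O[at_top](tail M (X 1))"
    by fastforce
  moreover have "(\<lambda>\<omega>. \<Sum>i\<in>{1..N}. X i \<omega>) \<in> borel_measurable M"
    using Suc.prems(1) by (intro borel_measurable_sum) auto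
  moreover have "tail M (\<lambda>\<omega>. \<Sum>i\<in>{1..N}. X i \<omega>) \<in> O[at_top](tail M (X 1))"
    using Suc by simp
  ultimately show ?case
    using tail_add_bigo[OF assms(1)] Suc.prems(1) \<open>N \<ge> 1\<close> by (simp add: sum.nat_ivl_Suc')
qed simp

lemma tail_prod_bigo:
  fixes N :: nat
  assumes "prob_space M" "N \<ge> 1" "\<And>i. i \<in> {1..N} \<Longrightarrow> X i \<in> borel_measurable M"
    and "\<forall>i\<in>{1..N}. \<forall>\<omega>\<in>space M. X i \<omega> \<ge> 0"
    and "\<forall>j\<in>{2..N}. \<exists>\<phi>. frakF \<phi>
          \<and> (\<lambda>x. tail M (X j) (\<phi> x)) \<in> O[at_top](tail M (X 1))
          \<and> (\<lambda>x. tail M (X 1) (x / \<phi> x)) \<in> O[at_top](tail M (X 1))"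
  shows "tail M (\<lambda>\<omega>. \<Prod>i\<in>{1..N}. X i \<omega>) \<in> O[at_top](tail M (X 1))"
  using assms(2-5)
proof (induction N rule: nat_induct_at_least)
  case (Suc N)
  then obtain \<phi> where "frakF \<phi>" "(\<lambda>x. tail M (X (Suc N)) (\<phi> x)) \<in> O[at_top](tail M (X 1))"
    "(\<lambda>x. tail M (X 1) (x / \<phi> x)) \<in> O[at_top](tail M (X 1))"
    by fastforce
  moreover have "(\<lambda>\<omega>. \<Prod>i\<in>{1..N}. X i \<omega>) \<in> borel_measurable M"
    using Suc.prems(1) by (intro borel_measurable_prod) auto
  moreover have "\<forall>\<omega>\<in>space M. (\<Prod>i\<in>{1..N}. X i \<omega>) \<ge> 0"
    using Suc.prems(2) by (auto intro!: prod_nonneg)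
  moreover have "tail M (\<lambda>\<omega>. \<Prod>i\<in>{1..N}. X i \<omega>) \<in> O[at_top](tail M (X 1))"
    using Suc by simp
  ultimately show ?case
    using tail_mult_bigo[OF assms(1)] Suc.prems(1) \<open>N \<ge> 1\<close> by (simp add: prod.nat_ivl_Suc')
qed simp

theorem theorem11:
  fixes M :: "'a measure" and X :: "nat \<Rightarrow> 'a \<Rightarrow> real" and N :: nat
  assumes "prob_space M"
    and "N \<ge> 1"
    and "prob_space.indep_vars M (\<lambda>_. borel) X {1..N}"
    and "\<forall>i\<in>{1..N}. \<forall>\<omega>\<in>space M. X i \<omega> \<ge> 0"
  shows
    "((\<forall>j\<in>{2..N}. \<exists>\<phi>. frakF \<phi>
          \<and> (\<lambda>x. tail M (X j) (\<phi> x)) \<in> O[at_top](\<lambda>x. tail M (X 1) x)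
          \<and> (\<lambda>x. tail M (X 1) (x / \<phi> x)) \<in> O[at_top](\<lambda>x. tail M (X 1) x))
       \<longrightarrow> (\<lambda>x. tail M (\<lambda>\<omega>. \<Prod>i\<in>{1..N}. X i \<omega>) x) \<in> O[at_top](\<lambda>x. tail M (X 1) x))
     \<and>
     ((\<forall>j\<in>{2..N}. \<exists>\<phi>. frakF \<phi>
          \<and> (\<lambda>x. tail M (X j) (\<phi> x)) \<in> O[at_top](\<lambda>x. tail M (X 1) x)
          \<and> (\<lambda>x. tail M (X 1) (x - \<phi> x)) \<in> O[at_top](\<lambda>x. tail M (X 1) x))
       \<longrightarrow> (\<lambda>x. tail M (\<lambda>\<omega>. \<Sum>i\<in>{1..N}. X i \<omega>) x) \<in> O[at_top](\<lambda>x. tail M (X 1) x))"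
proof -
  have X_measurable: "\<And>i. i \<in> {1..N} \<Longrightarrow> X i \<in> borel_measurable M"
    using assms(3) unfolding prob_space.indep_vars_def[OF assms(1)] by auto
  show ?thesis
    by (intro conjI impI tail_prod_bigo tail_sum_bigo) (use assms X_measurable in auto)
qed

end
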